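(* There exists a constant $C>0$ such that for all $x>0$, \[ \sum_{k\in\mathbf{Z}}|k|\,J_k(x)^2\le C\,x . \]
   Context: For $n\in\mathbf{Z}$ and $z\in\mathbf{C}$, $J_n(z)=\frac{1}{2\pi}\int_{-\pi}^{\pi}e^{i(nu-z\sin u)}\,du$ is the Bessel function of the first kind. *)

theory Defs
  imports "HOL-Analysis.Analysis"
begin

definition besselJ :: "int \<Rightarrow> complex \<Rightarrow> complex" where
  "besselJ n z = integral {-pi..pi} (\<lambda>u::real. exp (\<i> * (of_int n * of_real u - z * of_real (sin u))))
                 / (2 * of_real pi)"

end

theory Submission
  imports Defs
begin

text \<open>By Bessel's integral, \<open>J\<^sub>k(z)\<close> is the \<open>k\<close>-th Fourier coefficient of
  \<open>u \<mapsto> exp(-i z sin u)\<close>, and an integration by parts shows that \<open>k J\<^sub>k(z)\<close> is the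
  \<open>k\<close>-th Fourier coefficient of \<open>u \<mapsto> z cos u exp(-i z sin u)\<close>. For real \<open>x\<close> these
  functions are bounded by \<open>1\<close> and \<open>|x|\<close>, so Bessel's inequality gives
  \<open>\<Sum> |J\<^sub>k(x)|\<^sup>2 \<le> 1\<close> and \<open>\<Sum> k\<^sup>2 |J\<^sub>k(x)|\<^sup>2 \<le> x\<^sup>2\<close>. Writing
  \<open>|k| |J\<^sub>k|\<^sup>2 = |J\<^sub>k| |k J\<^sub>k|\<close>, Cauchy-Schwarz yields \<open>\<Sum> |k| |J\<^sub>k(x)|\<^sup>2 \<le> |x|\<close>,
  so \<open>C = 1\<close> works.\<close>

text \<open>The kernel is \<open>exp(i k u)\<close>, as in Bessel's integral, rather than the usual \<open>exp(-i k u)\<close>.\<close>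
definition fourier_coeff :: "(real \<Rightarrow> complex) \<Rightarrow> int \<Rightarrow> complex" where
  "fourier_coeff F k = integral {-pi..pi} (\<lambda>u. F u * cis (of_int k * u)) / (2 * pi)"

definition trig_poly :: "(int \<Rightarrow> complex) \<Rightarrow> int set \<Rightarrow> real \<Rightarrow> complex" where
  "trig_poly c K u = (\<Sum>k\<in>K. c k * cis (- (of_int k * u)))"

lemma exp_int_mult_pi_eq_exp_int_mult_neg_pi:
  "exp (\<i> * (of_int k * of_real pi)) = exp (\<i> * (of_int k * of_real (-pi)))"
  using exp_plus_2pin[of "\<i> * (of_int k * of_real (-pi))" k] by (simp add: algebra_simps)

lemma integral_cis_int_mult:
  "integral {-pi..pi} (\<lambda>u. cis (of_int m * u)) = (if m = 0 then 2 * pi else 0)"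
proof (cases "m = 0")
  case False
  let ?E = "\<lambda>w. exp (\<i> * of_int m * w) / (\<i> * of_int m)"
  have "((\<lambda>u. ?E (of_real u)) has_vector_derivative cis (of_int m * u)) (at u within {-pi..pi})" for u
    using False
    by (auto intro!: derivative_eq_intros has_vector_derivative_real_field simp: cis_conv_exp mult.assoc)
  then have "((\<lambda>u. cis (of_int m * u)) has_integral ?E pi - ?E (-pi)) {-pi..pi}"
    by (intro fundamental_theorem_of_calculus) auto
  moreover have "?E pi = ?E (-pi)"
    using exp_int_mult_pi_eq_exp_int_mult_neg_pi[of m] by (simp add: mult.assoc)
  ultimately show ?thesis
    using False by (simp add: integral_unique)
qed (simp add: scaleR_conv_of_real)

lemma fourier_coeff_trig_poly:
  assumes "finite K"
  shows "fourier_coeff (trig_poly c K) j = (if j \<in> K then c j else 0)"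
proof -
  have "integral {-pi..pi} (\<lambda>u. trig_poly c K u * cis (of_int j * u))
      = (\<Sum>k\<in>K. c k * integral {-pi..pi} (\<lambda>u. cis (of_int (j - k) * u)))"
    unfolding trig_poly_def sum_distrib_right
    using assms
    by (subst integral_sum)
       (auto simp: mult.assoc cis_mult algebra_simps intro!: integrable_continuous_interval continuous_intros)
  also have "\<dots> = (\<Sum>k\<in>K. if k = j then 2 * pi * c k else 0)"
    by (simp only: integral_cis_int_mult) (auto intro!: sum.cong)
  finally show ?thesis
    using assms by (simp add: fourier_coeff_def)
qed

lemma integral_mult_cnj_trig_poly:
  assumes "continuous_on {-pi..pi} F" "finite K"
  shows "integral {-pi..pi} (\<lambda>u. F u * cnj (trig_poly c K u))
       = 2 * pi * (\<Sum>k\<in>K. cnj (c k) * fourier_coeff F k)"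
proof -
  have "(\<lambda>u. F u * cnj (trig_poly c K u)) = (\<lambda>u. \<Sum>k\<in>K. cnj (c k) * (F u * cis (of_int k * u)))"
    by (simp add: trig_poly_def sum_distrib_left cis_cnj mult_ac)
  then have "integral {-pi..pi} (\<lambda>u. F u * cnj (trig_poly c K u))
      = (\<Sum>k\<in>K. cnj (c k) * integral {-pi..pi} (\<lambda>u. F u * cis (of_int k * u)))"
    using assms by (simp add: integral_sum integrable_continuous_interval continuous_intros)
  then show ?thesis
    by (simp add: fourier_coeff_def sum_distrib_left)
qed

lemma cmod_diff_power2:
  "(cmod (a - b))\<^sup>2 = (cmod a)\<^sup>2 - 2 * Re (a * cnj b) + Re (b * cnj b)"
  unfolding cmod_power2 by (simp add: power2_eq_square algebra_simps)

lemma integral_Re_eq_Re_integral: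
  "f integrable_on S \<Longrightarrow> integral S (\<lambda>x. Re (f x)) = Re (integral S f)"
  using integral_linear[OF _ bounded_linear_Re] by (simp add: o_def)

lemma bessel_inequality:
  assumes F: "continuous_on {-pi..pi} F" and K: "finite K"
  shows "(\<Sum>k\<in>K. (cmod (fourier_coeff F k))\<^sup>2) \<le> integral {-pi..pi} (\<lambda>u. (cmod (F u))\<^sup>2) / (2 * pi)"
proof -
  define c where "c = fourier_coeff F"
  define S where "S = trig_poly c K"
  define s where "s = (\<Sum>k\<in>K. (cmod (c k))\<^sup>2)"
  have S: "continuous_on {-pi..pi} S"
    unfolding S_def trig_poly_def by (intro continuous_intros)
  have sum_cnj: "(\<Sum>k\<in>K. cnj (c k) * c k) = of_real s"
    unfolding s_def of_real_sum complex_norm_square by (simp add: mult.commute)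
  have FS: "integral {-pi..pi} (\<lambda>u. F u * cnj (S u)) = 2 * pi * s"
    unfolding S_def using integral_mult_cnj_trig_poly[OF F K] sum_cnj by (simp add: c_def)
  have SS: "integral {-pi..pi} (\<lambda>u. S u * cnj (S u)) = 2 * pi * s"
    unfolding S_def using integral_mult_cnj_trig_poly[OF S[unfolded S_def] K] sum_cnj
    by (simp add: fourier_coeff_trig_poly[OF K])
  have "0 \<le> integral {-pi..pi} (\<lambda>u. (cmod (F u - S u))\<^sup>2)"
    by (intro integral_nonneg integrable_continuous_interval continuous_intros F S) simp
  also have "\<dots> = integral {-pi..pi} (\<lambda>u. (cmod (F u))\<^sup>2)
      - 2 * integral {-pi..pi} (\<lambda>u. Re (F u * cnj (S u))) + integral {-pi..pi} (\<lambda>u. Re (S u * cnj (S u)))"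
    unfolding cmod_diff_power2
    by (simp add: integral_add integral_diff integrable_continuous_interval continuous_intros F S)
  also have "\<dots> = integral {-pi..pi} (\<lambda>u. (cmod (F u))\<^sup>2) - 2 * pi * s"
    by (simp only: integral_Re_eq_Re_integral integrable_continuous_interval continuous_intros F S FS SS) simp
  finally show ?thesis
    by (simp add: s_def c_def field_simps)
qed

lemma bessel_inequality_bounded:
  assumes "continuous_on {-pi..pi} F" "finite K" and bound: "\<And>u. u \<in> {-pi..pi} \<Longrightarrow> cmod (F u) \<le> M"
  shows "(\<Sum>k\<in>K. (cmod (fourier_coeff F k))\<^sup>2) \<le> M\<^sup>2"
proof -
  have "integral {-pi..pi} (\<lambda>u. (cmod (F u))\<^sup>2) \<le> integral {-pi..pi} (\<lambda>u. M\<^sup>2)"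
    using assms
    by (intro integral_le integrable_continuous_interval continuous_intros)
       (auto intro!: power_mono order_trans[OF norm_ge_zero bound])
  then have "integral {-pi..pi} (\<lambda>u. (cmod (F u))\<^sup>2) / (2 * pi) \<le> M\<^sup>2"
    by (simp add: field_simps)
  with bessel_inequality[OF assms(1,2)] show ?thesis
    by linarith
qed

lemma besselJ_eq_fourier_coeff:
  "besselJ k z = fourier_coeff (\<lambda>u. exp (- (\<i> * z * of_real (sin u)))) k"
proof -
  have "exp (\<i> * (of_int k * of_real u - z * of_real (sin u))) = exp (- (\<i> * z * of_real (sin u))) * cis (of_int k * u)"
    for u
    by (simp add: cis_conv_exp algebra_simps flip: exp_add)
  then show ?thesis
    by (simp add: besselJ_def fourier_coeff_def)
qed

lemma of_int_mult_besselJ_eq_fourier_coeff: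
  "of_int k * besselJ k z = fourier_coeff (\<lambda>u. z * of_real (cos u) * exp (- (\<i> * z * of_real (sin u)))) k"
proof -
  define E where "E w = exp (\<i> * (of_int k * w - z * sin w))" for w
  define G where "G u = exp (- (\<i> * z * of_real (sin u))) * cis (of_int k * u)" for u
  have E_G: "E (of_real u) = G u" for u
    by (simp add: E_def G_def cis_conv_exp algebra_simps sin_of_real flip: exp_add)
  have "((\<lambda>u. E (of_real u)) has_vector_derivative \<i> * (of_int k - z * of_real (cos u)) * G u) (at u within {-pi..pi})"
    for u
    unfolding E_G[symmetric] E_def
    by (auto intro!: derivative_eq_intros has_vector_derivative_real_field simp: cos_of_real)
  then have "((\<lambda>u. \<i> * (of_int k - z * of_real (cos u)) * G u) has_integral E pi - E (-pi)) {-pi..pi}"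
    by (intro fundamental_theorem_of_calculus) auto
  moreover have "E pi = E (-pi)"
    using exp_int_mult_pi_eq_exp_int_mult_neg_pi[of k] by (simp add: E_def)
  ultimately have "integral {-pi..pi} (\<lambda>u. \<i> * ((of_int k * G u) - z * of_real (cos u) * G u)) = 0"
    by (simp add: integral_unique algebra_simps)
  then have "of_int k * integral {-pi..pi} G = integral {-pi..pi} (\<lambda>u. z * of_real (cos u) * G u)"
    unfolding G_def
    by (simp add: integral_diff integrable_continuous_interval continuous_intros)
  then show ?thesis
    by (simp add: besselJ_eq_fourier_coeff fourier_coeff_def G_def[abs_def] mult.assoc)
qed

lemma sum_norm_besselJ_sq_le:
  assumes "finite K"
  shows "(\<Sum>k\<in>K. (cmod (besselJ k (of_real x)))\<^sup>2) \<le> 1"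
  using bessel_inequality_bounded[of _ K 1] assms
  by (simp add: besselJ_eq_fourier_coeff norm_exp_eq_Re continuous_intros)

lemma sum_norm_int_mult_besselJ_sq_le:
  assumes "finite K"
  shows "(\<Sum>k\<in>K. (cmod (of_int k * besselJ k (of_real x)))\<^sup>2) \<le> x\<^sup>2"
  using bessel_inequality_bounded[of _ K "\<bar>x\<bar>"] assms
  by (simp add: of_int_mult_besselJ_eq_fourier_coeff norm_mult norm_exp_eq_Re abs_mult
      mult_left_le continuous_intros)

lemma sum_abs_mult_norm_besselJ_sq_le:
  assumes "finite K"
  shows "(\<Sum>k\<in>K. \<bar>real_of_int k\<bar> * (cmod (besselJ k (of_real x)))\<^sup>2) \<le> \<bar>x\<bar>"
proof -
  let ?J = "\<lambda>k. cmod (besselJ k (of_real x))"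
  have "(\<Sum>k\<in>K. \<bar>real_of_int k\<bar> * (?J k)\<^sup>2)\<^sup>2 = (\<Sum>k\<in>K. ?J k * cmod (of_int k * besselJ k (of_real x)))\<^sup>2"
    by (simp add: norm_mult power2_eq_square mult_ac)
  also have "\<dots> \<le> (\<Sum>k\<in>K. (?J k)\<^sup>2) * (\<Sum>k\<in>K. (cmod (of_int k * besselJ k (of_real x)))\<^sup>2)"
    by (rule Cauchy_Schwarz_ineq_sum)
  also have "\<dots> \<le> 1 * x\<^sup>2"
    using sum_norm_besselJ_sq_le[OF assms] sum_norm_int_mult_besselJ_sq_le[OF assms]
    by (intro mult_mono) (auto intro: sum_nonneg)
  finally show ?thesis
    by (simp add: abs_le_square_iff[symmetric] sum_nonneg)
qed

theorem lemma3p4: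
  shows "\<exists>C>0. \<forall>x::real. x > 0 \<longrightarrow>
           (\<lambda>k::int. \<bar>real_of_int k\<bar> * (Re (besselJ k (of_real x)))\<^sup>2) summable_on UNIV \<and>
           (\<Sum>\<^sub>\<infinity>k::int. \<bar>real_of_int k\<bar> * (Re (besselJ k (of_real x)))\<^sup>2) \<le> C * x"
proof (intro exI[of _ 1] conjI allI impI)
  fix x :: real
  assume "x > 0"
  have finite_sums: "(\<Sum>k\<in>K. \<bar>real_of_int k\<bar> * (Re (besselJ k (of_real x)))\<^sup>2) \<le> x" if "finite K" for K
  proof -
    have "(\<Sum>k\<in>K. \<bar>real_of_int k\<bar> * (Re (besselJ k (of_real x)))\<^sup>2)
        \<le> (\<Sum>k\<in>K. \<bar>real_of_int k\<bar> * (cmod (besselJ k (of_real x)))\<^sup>2)"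
      by (intro sum_mono mult_left_mono) (auto simp: abs_le_square_iff[symmetric] abs_Re_le_cmod)
    also have "\<dots> \<le> x"
      using sum_abs_mult_norm_besselJ_sq_le[OF that, of x] \<open>x > 0\<close> by simp
    finally show ?thesis .
  qed
  show summable: "(\<lambda>k::int. \<bar>real_of_int k\<bar> * (Re (besselJ k (of_real x)))\<^sup>2) summable_on UNIV"
    by (rule nonneg_bdd_above_summable_on) (auto intro!: bdd_aboveI finite_sums)
  show "(\<Sum>\<^sub>\<infinity>k::int. \<bar>real_of_int k\<bar> * (Re (besselJ k (of_real x)))\<^sup>2) \<le> 1 * x"
    using infsum_le_finite_sums[OF summable] finite_sums by simp
qed simp

end
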